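(* Let $\mathfrak D$ be an admissible domain with cover $\tilde{\mathfrak D}$, $T>0$, and let $\bm\varphi\in C^1([0,T];C^1(\mathbf{Cl}\tilde{\mathfrak D};\mathbb R^3))\cap C([0,T];C^2(\mathbf{Cl}\tilde{\mathfrak D};\mathbb R^3))$ satisfy $\bm\varphi(0,\bar{\bm x})=\bar{\bm x}$ for all $\bar{\bm x}\in\tilde{\mathfrak D}$. Let $\mathfrak O,\mathfrak O_0,\mathfrak O_1$ be connected open subsets of $\mathbb R^3$ with $\mathfrak B_0\subset\mathfrak O_0\Subset\mathfrak O\Subset\mathfrak O_1\Subset\tilde{\mathfrak D}$ and $\mathfrak O_1$ convex. Then for a sufficiently small $T_1\in\,]0,T[$ there is a mapping $\bm\psi(t,\cdot):\mathfrak O\to\mathfrak O_1$, $t\in[0,T_1]$, such that $\bm x=\bm\varphi(t,\bm\psi(t,\bm x))$ for all $(t,\bm x)\in[0,T_1]\times\mathfrak O$, and moreover $\mathfrak O_0\subset\bm\psi(t,\mathfrak O)$ for all $t\in[0,T_1]$.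
   Context: $\mathfrak B_0=\{\bm x\in\mathbb R^3:\|\bm x\|\le R_0\}$ with $R_0>0$. An admissible domain is an open connected $\mathfrak D\subset\mathbb R^3$ such that $\tilde{\mathfrak D}=\mathfrak D\cup\mathfrak B_0$ (its cover) is open and connected, $\mathfrak D=\tilde{\mathfrak D}\setminus\mathfrak B_0$, and $\partial\mathfrak D$ is smooth. $A\Subset B$ means $\mathbf{Cl}A$ is a compact subset of $B$. *)

theory Defs
  imports "HOL-Analysis.Analysis"
begin

type_synonym R3 = "real^3"

definition B0 :: "real \<Rightarrow> R3 set" where
  "B0 R0 = cball 0 R0"

definition compactly_contained :: "R3 set \<Rightarrow> R3 set \<Rightarrow> bool" (infix "\<Subset>" 50) where
  "A \<Subset> B \<longleftrightarrow> compact (closure A) \<and> closure A \<subseteq> B"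

fun iter_pd :: "3 list \<Rightarrow> (R3 \<Rightarrow> real) \<Rightarrow> R3 \<Rightarrow> real" where
  "iter_pd [] g = g"
| "iter_pd (i # is) g = (\<lambda>x. frechet_derivative (iter_pd is g) (at x) (axis i 1))"

definition smooth_on_R3 :: "R3 set \<Rightarrow> (R3 \<Rightarrow> real) \<Rightarrow> bool" where
  "smooth_on_R3 U g \<longleftrightarrow> (\<forall>is. (iter_pd is g) differentiable_on U)"

definition smooth_boundary :: "R3 set \<Rightarrow> bool" where
  "smooth_boundary D \<longleftrightarrow>
     (\<forall>p\<in>frontier D. \<exists>U g. open U \<and> p \<in> U \<and> smooth_on_R3 U g \<and>
        (\<forall>x\<in>U. frechet_derivative g (at x) \<noteq> (\<lambda>v. 0)) \<and>
        D \<inter> U = {x\<in>U. g x < 0})"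

definition cover :: "real \<Rightarrow> R3 set \<Rightarrow> R3 set" where
  "cover R0 D = D \<union> B0 R0"

definition admissible :: "real \<Rightarrow> R3 set \<Rightarrow> bool" where
  "admissible R0 D \<longleftrightarrow> open D \<and> connected D \<and> open (cover R0 D) \<and> connected (cover R0 D)
     \<and> D = cover R0 D - B0 R0 \<and> smooth_boundary D"

definition D1 :: "(R3 \<Rightarrow> R3) \<Rightarrow> R3 \<Rightarrow> (R3 \<Rightarrow>\<^sub>L R3)" where
  "D1 f x = Blinfun (frechet_derivative f (at x))"

definition D2 :: "(R3 \<Rightarrow> R3) \<Rightarrow> R3 \<Rightarrow> (R3 \<Rightarrow>\<^sub>L (R3 \<Rightarrow>\<^sub>L R3))" where
  "D2 f x = Blinfun (frechet_derivative (D1 f) (at x))"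

text \<open>C^1(Cl Omega) and C^2(Cl Omega) (Omega open): derivatives up to the given order exist in
  Omega and are bounded and uniformly continuous there (hence extend continuously to the closure).\<close>
definition C1cl :: "R3 set \<Rightarrow> (R3 \<Rightarrow> R3) set" where
  "C1cl \<Omega> = {f. (\<forall>x\<in>\<Omega>. f differentiable (at x)) \<and>
      bounded (f ` \<Omega>) \<and> uniformly_continuous_on \<Omega> f \<and>
      bounded (D1 f ` \<Omega>) \<and> uniformly_continuous_on \<Omega> (D1 f)}"

definition C2cl :: "R3 set \<Rightarrow> (R3 \<Rightarrow> R3) set" where
  "C2cl \<Omega> = {f. f \<in> C1cl \<Omega> \<and> (\<forall>x\<in>\<Omega>. D1 f differentiable (at x)) \<and>
      bounded (D2 f ` \<Omega>) \<and> uniformly_continuous_on \<Omega> (D2 f)}"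

definition normC1 :: "R3 set \<Rightarrow> (R3 \<Rightarrow> R3) \<Rightarrow> real" where
  "normC1 \<Omega> f = (SUP x\<in>\<Omega>. norm (f x)) + (SUP x\<in>\<Omega>. norm (D1 f x))"

definition normC2 :: "R3 set \<Rightarrow> (R3 \<Rightarrow> R3) \<Rightarrow> real" where
  "normC2 \<Omega> f = normC1 \<Omega> f + (SUP x\<in>\<Omega>. norm (D2 f x))"

definition C0_time_C2 :: "real \<Rightarrow> R3 set \<Rightarrow> (real \<Rightarrow> R3 \<Rightarrow> R3) \<Rightarrow> bool" where
  "C0_time_C2 T \<Omega> \<phi> \<longleftrightarrow>
     (\<forall>t\<in>{0..T}. \<phi> t \<in> C2cl \<Omega>) \<and>
     (\<forall>t\<in>{0..T}. ((\<lambda>s. normC2 \<Omega> (\<lambda>x. \<phi> s x - \<phi> t x)) \<longlongrightarrow> 0) (at t within {0..T}))"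

definition C1_time_C1 :: "real \<Rightarrow> R3 set \<Rightarrow> (real \<Rightarrow> R3 \<Rightarrow> R3) \<Rightarrow> bool" where
  "C1_time_C1 T \<Omega> \<phi> \<longleftrightarrow>
     (\<exists>\<phi>'. (\<forall>t\<in>{0..T}. \<phi> t \<in> C1cl \<Omega> \<and> \<phi>' t \<in> C1cl \<Omega>) \<and>
       (\<forall>t\<in>{0..T}. ((\<lambda>s. normC1 \<Omega> (\<lambda>x. \<phi> s x - \<phi> t x - (s - t) *\<^sub>R \<phi>' t x) / \<bar>s - t\<bar>)
           \<longlongrightarrow> 0) (at t within {0..T})) \<and>
       (\<forall>t\<in>{0..T}. ((\<lambda>s. normC1 \<Omega> (\<lambda>x. \<phi>' s x - \<phi>' t x)) \<longlongrightarrow> 0) (at t within {0..T})))"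

end

theory Submission
  imports Defs
begin

text \<open>
  Since \<open>\<phi>(0, \<cdot>)\<close> is the identity and \<open>t \<mapsto> \<phi>(t, \<cdot>)\<close> is continuous in the \<open>C\<^sup>2\<close> norm,
  for small \<open>t\<close> the map \<open>F = \<phi>(t, \<cdot>)\<close> is uniformly close to the identity together with its
  derivative: \<open>|F x - x| \<le> \<epsilon>\<close> and \<open>\<parallel>DF x - I\<parallel> \<le> 1/2\<close>. On the convex set \<open>\<O>\<^sub>1\<close> the map
  \<open>x - F x\<close> is then a \<open>1/2\<close>-contraction, so \<open>F\<close> is injective there, and for \<open>y \<in> \<O>\<close> the map
  \<open>z \<mapsto> z + y - F z\<close> sends the ball \<open>cball y r \<subseteq> \<O>\<^sub>1\<close> into itself once \<open>\<epsilon> \<le> r/2\<close>, so its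
  fixed point solves \<open>F z = y\<close>. Hence \<open>\<psi>(t, \<cdot>)\<close> can be taken as the inverse of \<open>F\<close> on \<open>\<O>\<^sub>1\<close>;
  it covers \<open>\<O>\<^sub>0\<close> because \<open>F\<close> moves points of \<open>\<O>\<^sub>0\<close> by less than their distance to the
  complement of \<open>\<O>\<close>.
\<close>

lemma near_identity_contraction:
  fixes F :: "'a::real_normed_vector \<Rightarrow> 'a" and F' :: "'a \<Rightarrow> 'a \<Rightarrow>\<^sub>L 'a"
  assumes "convex S"
    and "\<And>x. x \<in> S \<Longrightarrow> (F has_derivative F' x) (at x within S)"
    and "\<And>x. x \<in> S \<Longrightarrow> norm (F' x - id_blinfun) \<le> c"
    and "a \<in> S" "b \<in> S"
  shows "norm ((a - F a) - (b - F b)) \<le> c * norm (a - b)"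
proof (rule differentiable_bound[OF assms(1) _ _ assms(4,5)])
  fix x assume "x \<in> S"
  show "((\<lambda>x. x - F x) has_derivative blinfun_apply (id_blinfun - F' x)) (at x within S)"
    using has_derivative_diff[OF has_derivative_ident assms(2)[OF \<open>x \<in> S\<close>]]
    by (simp add: minus_blinfun.rep_eq fun_diff_def)
  show "onorm (blinfun_apply (id_blinfun - F' x)) \<le> c"
    using assms(3)[OF \<open>x \<in> S\<close>] by (simp add: norm_blinfun.rep_eq[symmetric] norm_minus_commute)
qed

lemma near_identity_inj_on:
  fixes F :: "'a::real_normed_vector \<Rightarrow> 'a" and F' :: "'a \<Rightarrow> 'a \<Rightarrow>\<^sub>L 'a"
  assumes "convex S"
    and "\<And>x. x \<in> S \<Longrightarrow> (F has_derivative F' x) (at x within S)"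
    and "\<And>x. x \<in> S \<Longrightarrow> norm (F' x - id_blinfun) \<le> c" "c < 1"
  shows "inj_on F S"
proof (rule inj_onI)
  fix a b assume "a \<in> S" "b \<in> S" "F a = F b"
  then have "norm (a - b) \<le> c * norm (a - b)"
    using near_identity_contraction[OF assms(1-3) \<open>a \<in> S\<close> \<open>b \<in> S\<close>] by simp
  with \<open>c < 1\<close> show "a = b"
    by (metis mult_le_cancel_right1 norm_ge_zero norm_le_zero_iff order.strict_iff_not right_minus_eq)
qed

lemma near_identity_hits_centre:
  fixes F :: "'a::banach \<Rightarrow> 'a" and F' :: "'a \<Rightarrow> 'a \<Rightarrow>\<^sub>L 'a"
  assumes "\<And>x. x \<in> cball y r \<Longrightarrow> (F has_derivative F' x) (at x within cball y r)"
    and "\<And>x. x \<in> cball y r \<Longrightarrow> norm (F' x - id_blinfun) \<le> c" "c < 1"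
    and "\<And>x. x \<in> cball y r \<Longrightarrow> norm (F x - x) \<le> (1 - c) * r"
    and "0 \<le> r"
  shows "y \<in> F ` cball y r"
proof -
  let ?g = "\<lambda>z. z + y - F z"
  have y: "y \<in> cball y r" using \<open>0 \<le> r\<close> by simp
  have "0 \<le> c" using assms(2)[OF y] norm_ge_zero order_trans by blast
  have contraction: "dist (?g a) (?g b) \<le> c * dist a b" if "a \<in> cball y r" "b \<in> cball y r" for a b
    using near_identity_contraction[OF convex_cball assms(1,2) that]
    by (simp add: dist_norm algebra_simps)
  have "?g ` cball y r \<subseteq> cball y r"
  proof clarify
    fix z assume z: "z \<in> cball y r"
    have "dist y (?g z) \<le> dist y (?g y) + dist (?g y) (?g z)" by (rule dist_triangle)
    also have "\<dots> \<le> (1 - c) * r + c * r"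
      using assms(4)[OF y] contraction[OF y z] mult_left_mono[OF z[unfolded mem_cball] \<open>0 \<le> c\<close>]
      by (simp add: dist_norm norm_minus_commute)
    finally show "?g z \<in> cball y r" by (simp add: algebra_simps)
  qed
  then obtain z where "z \<in> cball y r" "?g z = z"
    using Banach_fix[OF complete_eq_closed[THEN iffD2, OF closed_cball] _ \<open>0 \<le> c\<close> \<open>c < 1\<close> _ contraction] y
    by blast
  then show ?thesis by (auto intro: rev_image_eqI)
qed

lemma inv_into_near_identity:
  fixes F :: "'a::banach \<Rightarrow> 'a" and F' :: "'a \<Rightarrow> 'a \<Rightarrow>\<^sub>L 'a"
  assumes "convex S"
    and "\<And>x. x \<in> S \<Longrightarrow> (F has_derivative F' x) (at x within S)"
    and "\<And>x. x \<in> S \<Longrightarrow> norm (F' x - id_blinfun) \<le> c" "c < 1"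
    and "\<And>x. x \<in> S \<Longrightarrow> norm (F x - x) \<le> (1 - c) * r" "0 \<le> r"
    and "\<And>y. y \<in> U \<Longrightarrow> cball y r \<subseteq> S"
    and "V \<subseteq> S" "\<And>x. x \<in> V \<Longrightarrow> norm (F x - x) \<le> e" "\<And>x. x \<in> V \<Longrightarrow> cball x e \<subseteq> U"
  shows "inv_into S F ` U \<subseteq> S" "\<And>y. y \<in> U \<Longrightarrow> F (inv_into S F y) = y"
    "V \<subseteq> inv_into S F ` U"
proof -
  have "y \<in> F ` S" if "y \<in> U" for y
  proof -
    have ball: "cball y r \<subseteq> S" using assms(7)[OF that] .
    have "y \<in> F ` cball y r"
      by (rule near_identity_hits_centre[OF _ _ \<open>c < 1\<close> _ \<open>0 \<le> r\<close>])
        (use ball assms(2,3,5) has_derivative_subset in blast)+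
    with ball show ?thesis by blast
  qed
  then show "inv_into S F ` U \<subseteq> S" "\<And>y. y \<in> U \<Longrightarrow> F (inv_into S F y) = y"
    by (auto intro: inv_into_into f_inv_into_f)
  have "F x \<in> U" if "x \<in> V" for x
    using assms(9,10)[OF that] by (auto simp: dist_norm norm_minus_commute)
  moreover have "inj_on F S" by (rule near_identity_inj_on[OF assms(1-4)])
  ultimately show "V \<subseteq> inv_into S F ` U"
    using \<open>V \<subseteq> S\<close> by (auto intro!: rev_image_eqI)
qed

lemma compactly_contained_subset: "A \<Subset> B \<Longrightarrow> A \<subseteq> B"
  unfolding compactly_contained_def using closure_subset by blast

lemma compactly_contained_cball:
  assumes "A \<Subset> B" "open B"
  obtains r where "r > 0" "\<And>x. x \<in> A \<Longrightarrow> cball x r \<subseteq> B"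
proof -
  obtain r where "r > 0" "(\<Union>x\<in>closure A. cball x r) \<subseteq> B"
    using assms compact_subset_open_imp_cball_epsilon_subset unfolding compactly_contained_def
    by metis
  with closure_subset show thesis by (intro that) blast+
qed

lemma has_derivative_Blinfun_frechet:
  fixes f :: "'a::real_normed_vector \<Rightarrow> 'b::real_normed_vector"
  assumes "f differentiable at x"
  shows "(f has_derivative blinfun_apply (Blinfun (frechet_derivative f (at x)))) (at x)"
  using assms frechet_derivative_works has_derivative_bounded_linear bounded_linear_Blinfun_apply
  by metis

lemma Blinfun_frechet_eqI:
  fixes f :: "'a::real_normed_vector \<Rightarrow> 'b::real_normed_vector"
  assumes "(f has_derivative blinfun_apply L) (at x)"
  shows "Blinfun (frechet_derivative f (at x)) = L"
  by (metis assms frechet_derivative_at blinfun_apply_inverse)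

lemma has_derivative_D1:
  "f differentiable at x \<Longrightarrow> (f has_derivative blinfun_apply (D1 f x)) (at x)"
  unfolding D1_def by (rule has_derivative_Blinfun_frechet)

lemma D1_diff:
  assumes "f differentiable at x" "g differentiable at x"
  shows "D1 (\<lambda>y. f y - g y) x = D1 f x - D1 g x"
proof -
  have "((\<lambda>y. f y - g y) has_derivative blinfun_apply (D1 f x - D1 g x)) (at x)"
    using has_derivative_diff[OF has_derivative_D1[OF assms(1)] has_derivative_D1[OF assms(2)]]
    by (simp add: minus_blinfun.rep_eq fun_diff_def)
  then show ?thesis unfolding D1_def[of "\<lambda>y. f y - g y"] by (rule Blinfun_frechet_eqI)
qed

lemma D1_ident_on:
  assumes "open \<Omega>" "x \<in> \<Omega>" "\<And>y. y \<in> \<Omega> \<Longrightarrow> f y = y"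
  shows "D1 f x = id_blinfun"
  unfolding D1_def
  by (rule Blinfun_frechet_eqI, rule has_derivative_transform_within_open[OF _ assms(1,2)])
    (use assms(3) in auto)

lemma D2_diff:
  assumes "open \<Omega>" "x \<in> \<Omega>"
    and "\<And>y. y \<in> \<Omega> \<Longrightarrow> f differentiable at y" "\<And>y. y \<in> \<Omega> \<Longrightarrow> g differentiable at y"
    and "D1 f differentiable at x" "D1 g differentiable at x"
  shows "D2 (\<lambda>y. f y - g y) x = D2 f x - D2 g x"
proof -
  have "(D1 (\<lambda>y. f y - g y) has_derivative blinfun_apply (D2 f x - D2 g x)) (at x)"
  proof (rule has_derivative_transform_within_open[OF _ assms(1,2)])
    show "((\<lambda>y. D1 f y - D1 g y) has_derivative blinfun_apply (D2 f x - D2 g x)) (at x)"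
      using has_derivative_diff[OF has_derivative_Blinfun_frechet[OF assms(5)]
          has_derivative_Blinfun_frechet[OF assms(6)]]
      by (simp add: D2_def minus_blinfun.rep_eq fun_diff_def)
  qed (use assms(3,4) D1_diff in auto)
  then show ?thesis unfolding D2_def[of "\<lambda>y. f y - g y"] by (rule Blinfun_frechet_eqI)
qed

text \<open>A \<open>SUP\<close> over an unbounded set of reals is unspecified, so the bound on \<open>D2 f\<close> is needed
  just to make the last summand of \<open>normC2 \<Omega> f\<close> nonnegative.\<close>

lemma norm_le_normC2:
  assumes "x \<in> \<Omega>" "bounded (f ` \<Omega>)" "bounded (D1 f ` \<Omega>)" "bounded (D2 f ` \<Omega>)"
  shows "norm (f x) \<le> normC2 \<Omega> f" "norm (D1 f x) \<le> normC2 \<Omega> f"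
proof -
  have le_SUP: "norm (h x) \<le> (SUP y\<in>\<Omega>. norm (h y))"
    if "bounded (h ` \<Omega>)" for h :: "R3 \<Rightarrow> 'b::real_normed_vector"
    using that \<open>x \<in> \<Omega>\<close> by (intro cSUP_upper bounded_imp_bdd_above) (auto simp: bounded_norm_comp)
  note bounds = le_SUP[OF assms(2)] le_SUP[OF assms(3)] le_SUP[OF assms(4)]
    norm_ge_zero[of "f x"] norm_ge_zero[of "D1 f x"] norm_ge_zero[of "D2 f x"]
  show "norm (f x) \<le> normC2 \<Omega> f" "norm (D1 f x) \<le> normC2 \<Omega> f"
    using bounds unfolding normC2_def normC1_def by linarith+
qed

lemma norm_diff_le_normC2:
  assumes "open \<Omega>" "f \<in> C2cl \<Omega>" "g \<in> C2cl \<Omega>" "x \<in> \<Omega>"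
  shows "norm (f x - g x) \<le> normC2 \<Omega> (\<lambda>y. f y - g y)"
    and "norm (D1 f x - D1 g x) \<le> normC2 \<Omega> (\<lambda>y. f y - g y)"
proof -
  have diff: "\<And>y. y \<in> \<Omega> \<Longrightarrow> f differentiable at y" "\<And>y. y \<in> \<Omega> \<Longrightarrow> g differentiable at y"
    and diff1: "\<And>y. y \<in> \<Omega> \<Longrightarrow> D1 f differentiable at y" "\<And>y. y \<in> \<Omega> \<Longrightarrow> D1 g differentiable at y"
    and bounded: "bounded (f ` \<Omega>)" "bounded (g ` \<Omega>)" "bounded (D1 f ` \<Omega>)" "bounded (D1 g ` \<Omega>)"
      "bounded (D2 f ` \<Omega>)" "bounded (D2 g ` \<Omega>)"
    using assms(2,3) unfolding C2cl_def C1cl_def by auto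
  have "D1 (\<lambda>y. f y - g y) ` \<Omega> = (\<lambda>y. D1 f y - D1 g y) ` \<Omega>"
    using D1_diff diff by (intro image_cong) auto
  moreover have "D2 (\<lambda>y. f y - g y) ` \<Omega> = (\<lambda>y. D2 f y - D2 g y) ` \<Omega>"
    using D2_diff[OF assms(1) _ diff] diff1 by (intro image_cong) auto
  ultimately have "bounded ((\<lambda>y. f y - g y) ` \<Omega>)" "bounded (D1 (\<lambda>y. f y - g y) ` \<Omega>)"
    "bounded (D2 (\<lambda>y. f y - g y) ` \<Omega>)"
    using bounded by (simp_all add: bounded_minus_comp)
  from norm_le_normC2[OF assms(4) this]
  show "norm (f x - g x) \<le> normC2 \<Omega> (\<lambda>y. f y - g y)"
    and "norm (D1 f x - D1 g x) \<le> normC2 \<Omega> (\<lambda>y. f y - g y)"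
    using D1_diff[OF diff[OF assms(4)]] by simp_all
qed

lemma C0_time_C2_near_identity:
  assumes "C0_time_C2 T \<Omega> \<phi>" "open \<Omega>" "T > 0" "\<And>x. x \<in> \<Omega> \<Longrightarrow> \<phi> 0 x = x" "\<epsilon> > 0"
  obtains T0 where "T0 \<in> {0<..<T}"
    "\<And>t x. t \<in> {0..T0} \<Longrightarrow> x \<in> \<Omega> \<Longrightarrow> (\<phi> t has_derivative blinfun_apply (D1 (\<phi> t) x)) (at x)"
    "\<And>t x. t \<in> {0..T0} \<Longrightarrow> x \<in> \<Omega> \<Longrightarrow> norm (\<phi> t x - x) \<le> \<epsilon>"
    "\<And>t x. t \<in> {0..T0} \<Longrightarrow> x \<in> \<Omega> \<Longrightarrow> norm (D1 (\<phi> t) x - id_blinfun) \<le> \<epsilon>"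
proof -
  have C2: "\<And>t. t \<in> {0..T} \<Longrightarrow> \<phi> t \<in> C2cl \<Omega>"
    and lim: "((\<lambda>t. normC2 \<Omega> (\<lambda>x. \<phi> t x - \<phi> 0 x)) \<longlongrightarrow> 0) (at 0 within {0..T})"
    using assms(1,3) unfolding C0_time_C2_def by auto
  have "\<forall>\<^sub>F t in at 0 within {0..T}. dist (normC2 \<Omega> (\<lambda>x. \<phi> t x - \<phi> 0 x)) 0 < \<epsilon>"
    using lim \<open>\<epsilon> > 0\<close> by (rule tendstoD)
  then obtain d where "d > 0"
    and d: "\<forall>t\<in>{0..T}. t \<noteq> 0 \<and> dist t 0 < d \<longrightarrow>
      dist (normC2 \<Omega> (\<lambda>x. \<phi> t x - \<phi> 0 x)) 0 < \<epsilon>"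
    unfolding eventually_at by blast
  have D1_\<phi>0: "D1 (\<phi> 0) x = id_blinfun" if "x \<in> \<Omega>" for x
    by (rule D1_ident_on[OF assms(2) that assms(4)])
  show thesis
  proof
    show "min (d/2) (T/2) \<in> {0<..<T}" using \<open>d > 0\<close> \<open>T > 0\<close> by auto
    fix t x assume t: "t \<in> {0..min (d/2) (T/2)}" and x: "x \<in> \<Omega>"
    then have tT: "t \<in> {0..T}" "0 \<in> {0..T}" using \<open>T > 0\<close> by auto
    then show "(\<phi> t has_derivative blinfun_apply (D1 (\<phi> t) x)) (at x)"
      using C2 x unfolding C2cl_def C1cl_def by (blast intro: has_derivative_D1)
    have "norm (\<phi> t x - x) \<le> \<epsilon> \<and> norm (D1 (\<phi> t) x - id_blinfun) \<le> \<epsilon>"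
    proof (cases "t = 0")
      case True
      then show ?thesis using assms(4,5) D1_\<phi>0 x by simp
    next
      case False
      moreover have "dist t 0 < d" using t \<open>d > 0\<close> by auto
      ultimately have "normC2 \<Omega> (\<lambda>x. \<phi> t x - \<phi> 0 x) < \<epsilon>" using d tT(1) by auto
      with norm_diff_le_normC2[OF assms(2) C2[OF tT(1)] C2[OF tT(2)] x] show ?thesis
        unfolding assms(4)[OF x] D1_\<phi>0[OF x] by linarith
    qed
    then show "norm (\<phi> t x - x) \<le> \<epsilon>" "norm (D1 (\<phi> t) x - id_blinfun) \<le> \<epsilon>" by auto
  qed
qed

theorem proposition2:
  fixes R0 T :: real and D \<O> \<O>0 \<O>1 :: "R3 set" and \<phi> :: "real \<Rightarrow> R3 \<Rightarrow> R3"
  assumes "R0 > 0"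
    and "admissible R0 D"
    and "T > 0"
    and "C1_time_C1 T (cover R0 D) \<phi>"
    and "C0_time_C2 T (cover R0 D) \<phi>"
    and "\<forall>x\<in>cover R0 D. \<phi> 0 x = x"
    and "open \<O>" "connected \<O>" "open \<O>0" "connected \<O>0" "open \<O>1" "connected \<O>1"
    and "B0 R0 \<subseteq> \<O>0" "\<O>0 \<Subset> \<O>" "\<O> \<Subset> \<O>1" "\<O>1 \<Subset> cover R0 D"
    and "convex \<O>1"
  shows "\<exists>T0\<in>{0<..<T}. \<forall>T1\<in>{0<..T0}. \<exists>\<psi> :: real \<Rightarrow> R3 \<Rightarrow> R3.
           (\<forall>t\<in>{0..T1}. \<psi> t ` \<O> \<subseteq> \<O>1) \<and>
           (\<forall>t\<in>{0..T1}. \<forall>x\<in>\<O>. x = \<phi> t (\<psi> t x)) \<and>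
           (\<forall>t\<in>{0..T1}. \<O>0 \<subseteq> \<psi> t ` \<O>)"
proof -
  define \<Omega> where "\<Omega> = cover R0 D"
  have "open \<Omega>" using assms(2) unfolding admissible_def \<Omega>_def by blast
  have "\<O>0 \<subseteq> \<O>1" "\<O>1 \<subseteq> \<Omega>"
    using assms(14-16) compactly_contained_subset unfolding \<Omega>_def by blast+
  obtain r where "r > 0" and r: "\<And>x. x \<in> \<O> \<Longrightarrow> cball x r \<subseteq> \<O>1"
    by (rule compactly_contained_cball[OF assms(15,11)]) iprover
  obtain e where "e > 0" and e: "\<And>x. x \<in> \<O>0 \<Longrightarrow> cball x e \<subseteq> \<O>"
    by (rule compactly_contained_cball[OF assms(14,7)]) iprover
  define \<epsilon> where "\<epsilon> = min (min (r/2) e) (1/2)"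
  have "\<epsilon> > 0" using \<open>r > 0\<close> \<open>e > 0\<close> unfolding \<epsilon>_def by simp
  obtain T0 where T0: "T0 \<in> {0<..<T}"
    and deriv: "\<And>t x. t \<in> {0..T0} \<Longrightarrow> x \<in> \<Omega> \<Longrightarrow>
      (\<phi> t has_derivative blinfun_apply (D1 (\<phi> t) x)) (at x)"
    and close: "\<And>t x. t \<in> {0..T0} \<Longrightarrow> x \<in> \<Omega> \<Longrightarrow> norm (\<phi> t x - x) \<le> \<epsilon>"
    and close_D1: "\<And>t x. t \<in> {0..T0} \<Longrightarrow> x \<in> \<Omega> \<Longrightarrow> norm (D1 (\<phi> t) x - id_blinfun) \<le> \<epsilon>"
    using C0_time_C2_near_identity[OF assms(5)[folded \<Omega>_def] \<open>open \<Omega>\<close> assms(3) _ \<open>\<epsilon> > 0\<close>]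
      assms(6) unfolding \<Omega>_def by blast
  have "inv_into \<O>1 (\<phi> t) ` \<O> \<subseteq> \<O>1 \<and> (\<forall>y\<in>\<O>. \<phi> t (inv_into \<O>1 (\<phi> t) y) = y)
      \<and> \<O>0 \<subseteq> inv_into \<O>1 (\<phi> t) ` \<O>" if t: "t \<in> {0..T0}" for t
  proof -
    have deriv_\<O>1: "(\<phi> t has_derivative blinfun_apply (D1 (\<phi> t) x)) (at x within \<O>1)"
      if "x \<in> \<O>1" for x
      using deriv[OF t] that \<open>\<O>1 \<subseteq> \<Omega>\<close> by (blast intro: has_derivative_at_withinI)
    have D1_bound: "norm (D1 (\<phi> t) x - id_blinfun) \<le> 1/2"
      and moves_r: "norm (\<phi> t x - x) \<le> (1 - 1/2) * r" if "x \<in> \<O>1" for x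
      using close[OF t] close_D1[OF t] that \<open>\<O>1 \<subseteq> \<Omega>\<close> unfolding \<epsilon>_def by fastforce+
    have moves_e: "norm (\<phi> t x - x) \<le> e" if "x \<in> \<O>0" for x
      using close[OF t] that \<open>\<O>0 \<subseteq> \<O>1\<close> \<open>\<O>1 \<subseteq> \<Omega>\<close> unfolding \<epsilon>_def by fastforce
    from inv_into_near_identity[OF assms(17) deriv_\<O>1 D1_bound _ moves_r _ r \<open>\<O>0 \<subseteq> \<O>1\<close> moves_e e]
    show ?thesis using \<open>r > 0\<close> by simp
  qed
  with T0 show ?thesis by (intro bexI[of _ T0] ballI exI[of _ "\<lambda>t. inv_into \<O>1 (\<phi> t)"]) auto
qed

end
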